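(* Let $R$ be a constant such that for every closed orientable surface $S$ of genus at least 2 and all curves $\alpha,\beta$ in $S$, the Hausdorff distance in $\mathcal{C}(S)$ between $\Theta(\alpha,\beta)$ and any geodesic in $\mathcal{C}(S)$ joining $\alpha$ and $\beta$ is at most $R$. Let $S$ be a closed orientable surface of genus at least 2, let $\alpha,\beta$ be two curves in $S$, let $P(\alpha,\beta)$ be a path from $\alpha$ to $\beta$ in $\mathcal{C}(S)$ all of whose vertices lie in $\Theta(\alpha,\beta)$, and let $g$ be a geodesic in $\mathcal{C}(S)$ joining $\alpha$ and $\beta$. Then $g$ is contained in the closed $(2R+2)$-neighbourhood of $P(\alpha,\beta)$ in $\mathcal{C}(S)$.
   Context: Curves are essential simple closed curves in $S$. The curve graph $\mathcal{C}(S)$ has vertices the isotopy classes of curves, with edges between distinct classes having disjoint representatives; each edge has length 1. Given curves $\alpha,\beta$ in minimal position (transverse with the minimal number of intersection points in their isotopy classes, equivalently forming no bigon), a bicorn curve between $\alpha$ and $\beta$ is a curve formed as the union of one arc $a$ of $\alpha$ and one arc $b$ of $\beta$ such that $a$ and $b$ meet precisely at their endpoints. $\Theta(\alpha,\beta)$ is the set consisting of the isotopy classes of $\alpha$, of $\beta$, and of all bicorn curves between $\alpha$ and $\beta$ (with $\alpha,\beta$ isotoped into minimal position). *)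

theory Defs
  imports "HOL-Analysis.Analysis" "HOL-Homology.Homology"
    "HOL-Algebra.Free_Abelian_Groups" "HOL-Algebra.Elementary_Groups"
begin

definition circle :: "complex topology" where
  "circle = top_of_set (sphere 0 1)"

text \<open>Compact connected Hausdorff space locally homeomorphic to the plane (no boundary),
  orientable in the homological sense: H_2(X;Z) is infinite cyclic.\<close>
definition closed_orientable_surface :: "'a topology \<Rightarrow> bool" where
  "closed_orientable_surface X \<longleftrightarrow>
     topspace X \<noteq> {} \<and> compact_space X \<and> Hausdorff_space X \<and> connected_space X \<and>
     (\<forall>x\<in>topspace X. \<exists>U. openin X U \<and> x \<in> U \<and>
         subtopology X U homeomorphic_space (euclidean :: complex topology)) \<and>
     homology_group 2 X \<cong> integer_group"

definition surface_genus :: "'a topology \<Rightarrow> nat \<Rightarrow> bool" where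
  "surface_genus X g \<longleftrightarrow> homology_group 1 X \<cong> free_Abelian_group {..<2*g}"

definition simple_closed_curve :: "'a topology \<Rightarrow> 'a set \<Rightarrow> bool" where
  "simple_closed_curve X C \<longleftrightarrow> C \<subseteq> topspace X \<and> subtopology X C homeomorphic_space circle"

definition essential_curve :: "'a topology \<Rightarrow> 'a set \<Rightarrow> bool" where
  "essential_curve X C \<longleftrightarrow>
     (\<forall>\<gamma>. homeomorphic_map circle (subtopology X C) \<gamma> \<longrightarrow>
        \<not> (\<exists>c\<in>topspace X. homotopic_with (\<lambda>_. True) circle X \<gamma> (\<lambda>_. c)))"

definition curve :: "'a topology \<Rightarrow> 'a set \<Rightarrow> bool" where
  "curve X C \<longleftrightarrow> simple_closed_curve X C \<and> essential_curve X C"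

definition isotopic :: "'a topology \<Rightarrow> 'a set \<Rightarrow> 'a set \<Rightarrow> bool" where
  "isotopic X C D \<longleftrightarrow>
     (\<exists>H. continuous_map (prod_topology (top_of_set {0..1::real}) X) X H \<and>
          (\<forall>x\<in>topspace X. H (0, x) = x) \<and>
          (\<forall>t\<in>{0..1}. homeomorphic_map X X (\<lambda>x. H (t, x))) \<and>
          (\<lambda>x. H (1, x)) ` C = D)"

definition isotopy_class :: "'a topology \<Rightarrow> 'a set \<Rightarrow> 'a set set" where
  "isotopy_class X C = {D. curve X D \<and> isotopic X C D}"

definition cg_vertices :: "'a topology \<Rightarrow> 'a set set set" where
  "cg_vertices X = {isotopy_class X C | C. curve X C}"

definition cg_adj :: "'a topology \<Rightarrow> 'a set set \<Rightarrow> 'a set set \<Rightarrow> bool" where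
  "cg_adj X u v \<longleftrightarrow> u \<in> cg_vertices X \<and> v \<in> cg_vertices X \<and> u \<noteq> v \<and>
     (\<exists>C\<in>u. \<exists>D\<in>v. C \<inter> D = {})"

definition cg_walk :: "'a topology \<Rightarrow> 'a set set list \<Rightarrow> bool" where
  "cg_walk X p \<longleftrightarrow> p \<noteq> [] \<and> set p \<subseteq> cg_vertices X \<and>
     (\<forall>i. Suc i < length p \<longrightarrow> cg_adj X (p ! i) (p ! Suc i))"

definition cg_walk_from_to :: "'a topology \<Rightarrow> 'a set set list \<Rightarrow> 'a set set \<Rightarrow> 'a set set \<Rightarrow> bool" where
  "cg_walk_from_to X p u v \<longleftrightarrow> cg_walk X p \<and> hd p = u \<and> last p = v"

definition cg_dist_le :: "'a topology \<Rightarrow> 'a set set \<Rightarrow> 'a set set \<Rightarrow> real \<Rightarrow> bool" where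
  "cg_dist_le X u v r \<longleftrightarrow> (\<exists>p. cg_walk_from_to X p u v \<and> real (length p - 1) \<le> r)"

definition cg_geodesic :: "'a topology \<Rightarrow> 'a set set list \<Rightarrow> 'a set set \<Rightarrow> 'a set set \<Rightarrow> bool" where
  "cg_geodesic X p u v \<longleftrightarrow> cg_walk_from_to X p u v \<and>
     (\<forall>q. cg_walk_from_to X q u v \<longrightarrow> length p \<le> length q)"

definition cg_hausdorff_dist_le :: "'a topology \<Rightarrow> 'a set set set \<Rightarrow> 'a set set set \<Rightarrow> real \<Rightarrow> bool" where
  "cg_hausdorff_dist_le X A B r \<longleftrightarrow>
     (\<forall>a\<in>A. \<exists>b\<in>B. cg_dist_le X a b r) \<and> (\<forall>b\<in>B. \<exists>a\<in>A. cg_dist_le X b a r)"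

definition cg_closed_nbhd :: "'a topology \<Rightarrow> 'a set set set \<Rightarrow> real \<Rightarrow> 'a set set set" where
  "cg_closed_nbhd X A r = {v \<in> cg_vertices X. \<exists>a\<in>A. cg_dist_le X v a r}"

text \<open>Topological transversality: finitely many intersection points, at each of which the two
  curves look locally like the two coordinate axes of the plane.\<close>
definition transverse :: "'a topology \<Rightarrow> 'a set \<Rightarrow> 'a set \<Rightarrow> bool" where
  "transverse X A B \<longleftrightarrow> finite (A \<inter> B) \<and>
     (\<forall>x\<in>A \<inter> B. \<exists>U \<phi>. openin X U \<and> x \<in> U \<and>
        homeomorphic_map (subtopology X U) (euclidean :: complex topology) \<phi> \<and>
        \<phi> x = 0 \<and> \<phi> ` (A \<inter> U) = {z. Im z = 0} \<and> \<phi> ` (B \<inter> U) = {z. Re z = 0})"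

definition minimal_position :: "'a topology \<Rightarrow> 'a set \<Rightarrow> 'a set \<Rightarrow> bool" where
  "minimal_position X A B \<longleftrightarrow> transverse X A B \<and>
     (\<forall>A' B'. curve X A' \<and> curve X B' \<and> isotopic X A A' \<and> isotopic X B B' \<and>
        transverse X A' B' \<longrightarrow> card (A \<inter> B) \<le> card (A' \<inter> B'))"

definition arc_between :: "'a topology \<Rightarrow> 'a set \<Rightarrow> 'a \<Rightarrow> 'a \<Rightarrow> bool" where
  "arc_between X a p q \<longleftrightarrow> a \<subseteq> topspace X \<and>
     (\<exists>h. homeomorphic_map (top_of_set {0..1::real}) (subtopology X a) h \<and> h 0 = p \<and> h 1 = q)"

definition bicorn :: "'a topology \<Rightarrow> 'a set \<Rightarrow> 'a set \<Rightarrow> 'a set \<Rightarrow> bool" where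
  "bicorn X \<alpha> \<beta> c \<longleftrightarrow> curve X c \<and>
     (\<exists>a b p q. a \<subseteq> \<alpha> \<and> b \<subseteq> \<beta> \<and> arc_between X a p q \<and> arc_between X b p q \<and>
        a \<inter> b = {p, q} \<and> c = a \<union> b)"

text \<open>Theta(alpha, beta), for alpha, beta already in minimal position.\<close>
definition Theta :: "'a topology \<Rightarrow> 'a set \<Rightarrow> 'a set \<Rightarrow> 'a set set set" where
  "Theta X \<alpha> \<beta> = {isotopy_class X \<alpha>, isotopy_class X \<beta>} \<union>
     {isotopy_class X c | c. bicorn X \<alpha> \<beta> c}"

end

theory Submission
  imports Defs
begin

text \<open>Only the coarse geometry of the curve graph matters. By hypothesis every vertex of
  \<open>P\<close> lies within \<open>R\<close> of the geodesic \<open>g\<close>; project each vertex of \<open>P\<close> to such a nearby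
  vertex of \<open>g\<close>, keeping the endpoints fixed. Consecutive vertices of \<open>P\<close> are adjacent, so
  their projections are at most \<open>2R + 1\<close> apart along \<open>g\<close>, and since subpaths of a geodesic
  are geodesic, every vertex of \<open>g\<close> lies between two consecutive projections and within
  \<open>R + 1\<close> of one of them along \<open>g\<close>, hence within \<open>2R + 1\<close> of \<open>P\<close>.\<close>

lemma cg_walk_iff_successively:
  "cg_walk X p \<longleftrightarrow> p \<noteq> [] \<and> set p \<subseteq> cg_vertices X \<and> successively (cg_adj X) p"
  unfolding cg_walk_def successively_conv_nth by blast

lemma cg_adj_sym: "cg_adj X u v \<Longrightarrow> cg_adj X v u"
  unfolding cg_adj_def by blast

lemma cg_walk_from_to_rev: "cg_walk_from_to X p u v \<Longrightarrow> cg_walk_from_to X (rev p) v u"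
  unfolding cg_walk_from_to_def cg_walk_iff_successively successively_rev
  by (auto intro: successively_mono cg_adj_sym simp: hd_rev last_rev)

lemma cg_walk_from_to_append:
  assumes "cg_walk_from_to X p u v" "cg_walk_from_to X q v w"
  shows "cg_walk_from_to X (p @ tl q) u w"
proof -
  obtain q' where q: "q = v # q'"
    using assms(2) unfolding cg_walk_from_to_def cg_walk_def by (cases q) auto
  with assms show ?thesis
    unfolding cg_walk_from_to_def cg_walk_iff_successively successively_append_iff
    by (cases "q' = []") (auto simp: successively_Cons)
qed

lemma cg_walk_segment:
  assumes "cg_walk X p" "i \<le> j" "j < length p"
  shows "cg_walk_from_to X (take (Suc (j - i)) (drop i p)) (p ! i) (p ! j)"
  using assms unfolding cg_walk_from_to_def cg_walk_def
  by (auto simp: hd_take hd_drop_conv_nth last_conv_nth dest!: in_set_takeD in_set_dropD)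

lemma cg_dist_le_nonneg: "cg_dist_le X u v r \<Longrightarrow> 0 \<le> r"
  unfolding cg_dist_le_def by (meson of_nat_0_le_iff order_trans)

lemma cg_dist_le_mono: "cg_dist_le X u v r \<Longrightarrow> r \<le> s \<Longrightarrow> cg_dist_le X u v s"
  unfolding cg_dist_le_def by force

lemma cg_dist_le_refl: "u \<in> cg_vertices X \<Longrightarrow> cg_dist_le X u u 0"
  unfolding cg_dist_le_def cg_walk_from_to_def cg_walk_def
  by (intro exI[of _ "[u]"]) auto

lemma cg_dist_le_adj: "cg_adj X u v \<Longrightarrow> cg_dist_le X u v 1"
  unfolding cg_dist_le_def cg_walk_from_to_def cg_walk_def
  by (intro exI[of _ "[u, v]"]) (auto simp: cg_adj_def less_Suc_eq)

lemma cg_dist_le_sym: "cg_dist_le X u v r \<Longrightarrow> cg_dist_le X v u r"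
  unfolding cg_dist_le_def by (metis cg_walk_from_to_rev length_rev)

lemma cg_dist_le_trans:
  assumes "cg_dist_le X u v r" "cg_dist_le X v w s"
  shows "cg_dist_le X u w (r + s)"
proof -
  obtain p q where p: "cg_walk_from_to X p u v" "real (length p - 1) \<le> r"
    and q: "cg_walk_from_to X q v w" "real (length q - 1) \<le> s"
    using assms unfolding cg_dist_le_def by blast
  have "p \<noteq> []" "q \<noteq> []" using p q unfolding cg_walk_from_to_def cg_walk_def by auto
  with p q show ?thesis
    unfolding cg_dist_le_def
    by (intro exI[of _ "p @ tl q"]) (auto simp: cg_walk_from_to_append of_nat_diff)
qed

lemma cg_walk_nth_dist_le:
  assumes "cg_walk X p" "i \<le> j" "j < length p"
  shows "cg_dist_le X (p ! i) (p ! j) (real (j - i))"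
  using cg_walk_segment[OF assms] assms(2,3) unfolding cg_dist_le_def by force

text \<open>A shorter walk from \<open>g ! i\<close> to \<open>g ! j\<close> could be spliced into \<open>g\<close>.\<close>
lemma cg_geodesic_nth_dist_lower_bound:
  assumes g: "cg_geodesic X g u w" and ij: "i \<le> j" "j < length g"
    and d: "cg_dist_le X (g ! i) (g ! j) r"
  shows "real (j - i) \<le> r"
proof -
  obtain q where q: "cg_walk_from_to X q (g ! i) (g ! j)" "real (length q - 1) \<le> r"
    using d unfolding cg_dist_le_def by blast
  have gw: "cg_walk X g" "hd g = u" "last g = w" "g \<noteq> []"
    using g unfolding cg_geodesic_def cg_walk_from_to_def cg_walk_def by auto
  let ?pre = "take (Suc i) g" and ?suf = "take (Suc (length g - 1 - j)) (drop j g)"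
  have "cg_walk_from_to X ?pre u (g ! i)"
    using cg_walk_segment[OF gw(1), of 0 i] ij gw by (simp add: hd_conv_nth)
  moreover have "cg_walk_from_to X ?suf (g ! j) w"
    using cg_walk_segment[OF gw(1), of j "length g - 1"] ij gw by (simp add: last_conv_nth)
  ultimately have "cg_walk_from_to X ((?pre @ tl q) @ tl ?suf) u w"
    using q(1) by (blast intro: cg_walk_from_to_append)
  then have "length g \<le> length ((?pre @ tl q) @ tl ?suf)"
    using g unfolding cg_geodesic_def by blast
  then have "j - i \<le> length q - 1" using ij by simp
  then show ?thesis using q(2) by (meson of_nat_le_iff order_trans)
qed

lemma nat_last_index_below:
  fixes f :: "nat \<Rightarrow> nat"
  assumes "f 0 \<le> k"
  shows "\<exists>i\<le>m. f i \<le> k \<and> (i < m \<longrightarrow> k < f (Suc i))"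
proof (induction m)
  case (Suc m)
  then obtain i where i: "i \<le> m" "f i \<le> k" "i < m \<longrightarrow> k < f (Suc i)" by blast
  show ?case
  proof (cases "f (Suc m) \<le> k")
    case False
    with i show ?thesis by (intro exI[of _ i]) (auto simp: less_Suc_eq)
  qed auto
qed (use assms in auto)

lemma cg_walk_projection_to_geodesic:
  assumes g: "cg_geodesic X g u v" and p: "cg_walk_from_to X p u v"
    and close: "\<forall>a\<in>set p. \<exists>b\<in>set g. cg_dist_le X a b R"
  obtains f where "\<And>i. i < length p \<Longrightarrow> f i < length g \<and> cg_dist_le X (p ! i) (g ! f i) R"
    and "f 0 = 0" and "f (length p - 1) = length g - 1"
proof -
  have gw: "cg_walk X g" "hd g = u" "last g = v" "g \<noteq> []" "set g \<subseteq> cg_vertices X"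
    and pw: "hd p = u" "last p = v" "p \<noteq> []"
    using g p unfolding cg_geodesic_def cg_walk_from_to_def cg_walk_def by auto
  have R: "0 \<le> R" using close pw(3) cg_dist_le_nonneg by (metis last_in_set)
  have "\<forall>i<length p. \<exists>j<length g. cg_dist_le X (p ! i) (g ! j) R"
    using close by (metis in_set_conv_nth nth_mem)
  then obtain h where h: "\<And>i. i < length p \<Longrightarrow> h i < length g \<and> cg_dist_le X (p ! i) (g ! h i) R"
    by metis
  define f where "f = (\<lambda>i. if i = 0 then 0 else if i = length p - 1 then length g - 1 else h i)"
  have glen: "length g \<le> length p" using g p unfolding cg_geodesic_def by blast
  then have flast: "f (length p - 1) = length g - 1" using gw(4) by (auto simp: f_def)
  have fclose: "f i < length g \<and> cg_dist_le X (p ! i) (g ! f i) R" if "i < length p" for i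
  proof -
    have end0: "p ! 0 = g ! 0" and end1: "p ! (length p - 1) = g ! (length g - 1)"
      using gw pw by (simp_all add: hd_conv_nth last_conv_nth)
    show ?thesis
    proof (cases "i = 0 \<or> i = length p - 1")
      case True
      then have "p ! i = g ! f i" "f i < length g"
        using end0 end1 gw(4) glen by (auto simp: f_def)
      then show ?thesis using gw(5) R by (metis cg_dist_le_mono cg_dist_le_refl nth_mem subsetD)
    next
      case False
      then show ?thesis using h[OF that] by (simp add: f_def)
    qed
  qed
  have f0: "f 0 = 0" by (simp add: f_def)
  show ?thesis using that[OF fclose f0 flast] .
qed

lemma cg_geodesic_nth_near_adjacent:
  assumes g: "cg_geodesic X g u v" and ab: "cg_adj X a b"
    and a: "cg_dist_le X a (g ! m) R" and b: "cg_dist_le X b (g ! n) R"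
    and k: "m \<le> k" "k \<le> n" "n < length g"
  shows "cg_dist_le X (g ! k) a (2 * R + 1) \<or> cg_dist_le X (g ! k) b (2 * R + 1)"
proof -
  have gw: "cg_walk X g" using g unfolding cg_geodesic_def cg_walk_from_to_def by blast
  have "cg_dist_le X (g ! m) (g ! n) (R + 1 + R)"
    using cg_dist_le_trans[OF cg_dist_le_trans[OF cg_dist_le_sym[OF a] cg_dist_le_adj[OF ab]] b] .
  then have "real (n - m) \<le> R + 1 + R"
    by (rule cg_geodesic_nth_dist_lower_bound[OF g le_trans[OF k(1,2)] k(3)])
  moreover have "real (n - m) = real (k - m) + real (n - k)" using k by simp
  ultimately have "real (k - m) + R \<le> 2 * R + 1 \<or> real (n - k) + R \<le> 2 * R + 1"
    by linarith
  then show ?thesis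
  proof
    assume close_m: "real (k - m) + R \<le> 2 * R + 1"
    have "k < length g" using k by simp
    then have "cg_dist_le X (g ! k) a (real (k - m) + R)"
      using cg_dist_le_trans[OF cg_dist_le_sym[OF cg_walk_nth_dist_le[OF gw k(1)]] cg_dist_le_sym[OF a]]
      by simp
    then have "cg_dist_le X (g ! k) a (2 * R + 1)" using close_m by (rule cg_dist_le_mono)
    then show ?thesis ..
  next
    assume close_n: "real (n - k) + R \<le> 2 * R + 1"
    have "cg_dist_le X (g ! k) b (real (n - k) + R)"
      using cg_dist_le_trans[OF cg_walk_nth_dist_le[OF gw k(2,3)] cg_dist_le_sym[OF b]] .
    then have "cg_dist_le X (g ! k) b (2 * R + 1)" using close_n by (rule cg_dist_le_mono)
    then show ?thesis ..
  qed
qed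

lemma cg_geodesic_subset_closed_nbhd_of_walk:
  assumes g: "cg_geodesic X g u v" and p: "cg_walk_from_to X p u v"
    and close: "\<forall>a\<in>set p. \<exists>b\<in>set g. cg_dist_le X a b R"
  shows "set g \<subseteq> cg_closed_nbhd X (set p) (2 * R + 1)"
proof
  obtain f where f: "\<And>i. i < length p \<Longrightarrow> f i < length g \<and> cg_dist_le X (p ! i) (g ! f i) R"
    and f0: "f 0 = 0" and flast: "f (length p - 1) = length g - 1"
    using cg_walk_projection_to_geodesic[OF assms] by blast
  have gv: "set g \<subseteq> cg_vertices X" and pw: "cg_walk X p" "p \<noteq> []"
    using g p unfolding cg_geodesic_def cg_walk_from_to_def cg_walk_def by auto
  fix x assume "x \<in> set g"
  then obtain k where k: "k < length g" "x = g ! k" by (auto simp: in_set_conv_nth)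
  obtain i where i: "i \<le> length p - 1" "f i \<le> k" "i < length p - 1 \<Longrightarrow> k < f (Suc i)"
    using nat_last_index_below[of f k "length p - 1"] f0 by auto
  have "i < length p" using i(1) pw(2) by (cases p) auto
  then have fi: "cg_dist_le X (p ! i) (g ! f i) R" using f by blast
  have "\<exists>j<length p. cg_dist_le X x (p ! j) (2 * R + 1)"
  proof (cases "i < length p - 1")
    case True
    then have si: "Suc i < length p" by simp
    then have adj: "cg_adj X (p ! i) (p ! Suc i)" using pw(1) unfolding cg_walk_def by blast
    have fs: "cg_dist_le X (p ! Suc i) (g ! f (Suc i)) R" "f (Suc i) < length g"
      using f[OF si] by auto
    have "k \<le> f (Suc i)" using i(3) True by simp
    then have "cg_dist_le X x (p ! i) (2 * R + 1) \<or> cg_dist_le X x (p ! Suc i) (2 * R + 1)"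
      using cg_geodesic_nth_near_adjacent[OF g adj fi fs(1) i(2) _ fs(2)] k(2) by simp
    then show ?thesis using si \<open>i < length p\<close> by blast
  next
    case False
    then have "f i = length g - 1" using i(1) flast by simp
    then have "k = f i" using i(2) k(1) by linarith
    then have "x = g ! f i" using k(2) by simp
    moreover have "R \<le> 2 * R + 1" using cg_dist_le_nonneg[OF fi] by simp
    ultimately show ?thesis
      using cg_dist_le_mono[OF cg_dist_le_sym[OF fi]] \<open>i < length p\<close> by blast
  qed
  then show "x \<in> cg_closed_nbhd X (set p) (2 * R + 1)"
    using k gv unfolding cg_closed_nbhd_def by auto
qed

lemma cg_closed_nbhd_mono: "r \<le> s \<Longrightarrow> cg_closed_nbhd X A r \<subseteq> cg_closed_nbhd X A s"
  unfolding cg_closed_nbhd_def by (auto intro: cg_dist_le_mono)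

theorem lemma5:
  fixes R :: real and X :: "'a topology" and \<alpha> \<beta> :: "'a set"
    and P g :: "'a set set list"
  assumes hR: "\<forall>(Y::'a topology) \<alpha>' \<beta>' g'.
      closed_orientable_surface Y \<and> (\<exists>n\<ge>2. surface_genus Y n) \<and>
      curve Y \<alpha>' \<and> curve Y \<beta>' \<and> minimal_position Y \<alpha>' \<beta>' \<and>
      cg_geodesic Y g' (isotopy_class Y \<alpha>') (isotopy_class Y \<beta>')
      \<longrightarrow> cg_hausdorff_dist_le Y (Theta Y \<alpha>' \<beta>') (set g') R"
    and hS: "closed_orientable_surface X" and hgenus: "\<exists>n\<ge>2. surface_genus X n"
    and h\<alpha>: "curve X \<alpha>" and h\<beta>: "curve X \<beta>"
    and hmin: "minimal_position X \<alpha> \<beta>"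
    and hP: "cg_walk_from_to X P (isotopy_class X \<alpha>) (isotopy_class X \<beta>)"
    and hPTheta: "set P \<subseteq> Theta X \<alpha> \<beta>"
    and hg: "cg_geodesic X g (isotopy_class X \<alpha>) (isotopy_class X \<beta>)"
  shows "set g \<subseteq> cg_closed_nbhd X (set P) (2 * R + 2)"
proof -
  have "cg_hausdorff_dist_le X (Theta X \<alpha> \<beta>) (set g) R"
    using hR hS hgenus h\<alpha> h\<beta> hmin hg by blast
  then have "\<forall>a\<in>set P. \<exists>b\<in>set g. cg_dist_le X a b R"
    using hPTheta unfolding cg_hausdorff_dist_le_def by blast
  then have "set g \<subseteq> cg_closed_nbhd X (set P) (2 * R + 1)"
    using cg_geodesic_subset_closed_nbhd_of_walk[OF hg hP] by blast
  also have "\<dots> \<subseteq> cg_closed_nbhd X (set P) (2 * R + 2)"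
    by (rule cg_closed_nbhd_mono) simp
  finally show ?thesis .
qed

end
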